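(* Consider a homogeneous linear Cauchy elastic body with elasticity matrix $C_{\alpha\beta}=c_{\alpha\beta}+b_{\alpha\beta}$ ($c$ symmetric, $b$ antisymmetric) undergoing a homogeneous displacement-controlled deformation in which, for fixed indices $\xi\neq\eta$ in $\{1,\dots,6\}$, the only nonzero Voigt strains are $$\epsilon_\xi(t)=\mathring\epsilon_\xi\sin\frac{\pi k_\xi t}{t_0},\qquad \epsilon_\eta(t)=\mathring\epsilon_\eta\sin\frac{\pi k_\eta t}{t_0},\qquad t\in[0,t_0],$$ where $\mathring\epsilon_\xi,\mathring\epsilon_\eta$ are constants and $k_\xi,k_\eta$ are positive integers with $k_\xi+k_\eta$ odd. This path $\Gamma_{\xi\eta}$ is closed in strain space, and the net stress-work density is $$w(\Gamma_{\xi\eta})=\frac{4k_\xi k_\eta\,\mathring\epsilon_\xi\mathring\epsilon_\eta}{k_\eta^2-k_\xi^2}\,b_{\xi\eta};$$ hence $b_{\xi\eta}=\dfrac{k_\eta^2-k_\xi^2}{4k_\xi k_\eta\mathring\epsilon_\xi\mathring\epsilon_\eta}\,w(\Gamma_{\xi\eta})$ whenever $\mathring\epsilon_\xi\mathring\epsilon_\eta\neq0$.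
   Context: Linear Cauchy elasticity: $\sigma_{ab}=\mathsf C_{abcd}\epsilon_{cd}$ with minor symmetries but not necessarily the major symmetry. In Voigt notation $(11,22,33,23,31,12)\leftrightarrow(1,\dots,6)$, $\sigma_\alpha=\sum_{\beta=1}^6C_{\alpha\beta}\epsilon_\beta$ with $C_{\alpha\beta}=c_{\alpha\beta}+b_{\alpha\beta}$, $c_{\alpha\beta}=c_{\beta\alpha}$, $b_{\alpha\beta}=-b_{\beta\alpha}$ (the antisymmetric elastic constants). For a homogeneous strain history $\epsilon_\alpha(t)$, $t\in[0,t_0]$, forming a closed path $\Gamma$ in strain space, the net stress-work density is $w(\Gamma)=\int_0^{t_0}\sum_{\alpha,\beta=1}^6C_{\alpha\beta}\,\epsilon_\beta(t)\,\dot\epsilon_\alpha(t)\,dt$. *)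

theory Defs
  imports "HOL-Analysis.Analysis"
begin

text \<open>Voigt indices are 1..6. A strain history is a function
  eps :: real => nat => real (time, Voigt index).\<close>

definition stress_work :: "(nat \<Rightarrow> nat \<Rightarrow> real) \<Rightarrow> (real \<Rightarrow> nat \<Rightarrow> real) \<Rightarrow> real \<Rightarrow> real" where
  "stress_work Cm eps t0 =
     integral {0..t0} (\<lambda>t. \<Sum>\<alpha>\<in>{1..6}. \<Sum>\<beta>\<in>{1..6}.
        Cm \<alpha> \<beta> * eps t \<beta> * deriv (\<lambda>s. eps s \<alpha>) t)"

definition sin_path :: "nat \<Rightarrow> nat \<Rightarrow> real \<Rightarrow> real \<Rightarrow> nat \<Rightarrow> nat \<Rightarrow> real \<Rightarrow> real \<Rightarrow> nat \<Rightarrow> real" where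
  "sin_path \<xi> \<eta> e\<xi> e\<eta> k\<xi> k\<eta> t0 t \<alpha> =
     (if \<alpha> = \<xi> then e\<xi> * sin (pi * real k\<xi> * t / t0)
      else if \<alpha> = \<eta> then e\<eta> * sin (pi * real k\<eta> * t / t0)
      else 0)"

end

theory Submission
  imports Defs
begin

text \<open>Along a path in the (\<xi>,\<eta>)-plane of strain space the stress power splits as
  the time derivative of the stored energy of the symmetric part \<open>c\<close> plus
  \<open>b\<^sub>\<xi>\<^sub>\<eta> (\<epsilon>\<^sub>\<eta> \<epsilon>\<^sub>\<xi>' - \<epsilon>\<^sub>\<xi> \<epsilon>\<^sub>\<eta>')\<close>. Over a closed path only the second term survives,
  so the net work is \<open>b\<^sub>\<xi>\<^sub>\<eta>\<close> times a purely kinematic quantity. For the two sine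
  waves this quantity has an elementary antiderivative whose increment over
  \<open>[0,t\<^sub>0]\<close> is \<open>4 k\<^sub>\<xi> k\<^sub>\<eta> e\<^sub>\<xi> e\<^sub>\<eta> / (k\<^sub>\<eta>\<^sup>2 - k\<^sub>\<xi>\<^sup>2)\<close>; the parity condition makes
  \<open>cos (\<pi> k\<^sub>\<xi>) cos (\<pi> k\<^sub>\<eta>) = -1\<close>.\<close>

definition two_component_path ::
    "nat \<Rightarrow> nat \<Rightarrow> (real \<Rightarrow> real) \<Rightarrow> (real \<Rightarrow> real) \<Rightarrow> real \<Rightarrow> nat \<Rightarrow> real" where
  "two_component_path \<xi> \<eta> x y t \<alpha> = (if \<alpha> = \<xi> then x t else if \<alpha> = \<eta> then y t else 0)"

lemma sin_path_eq_two_component_path: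
  "sin_path \<xi> \<eta> e\<xi> e\<eta> k\<xi> k\<eta> t0 =
     two_component_path \<xi> \<eta> (\<lambda>t. e\<xi> * sin (pi * real k\<xi> / t0 * t))
       (\<lambda>t. e\<eta> * sin (pi * real k\<eta> / t0 * t))"
  by (simp add: fun_eq_iff sin_path_def two_component_path_def)

lemma stress_power_two_component_path:
  fixes C :: "nat \<Rightarrow> nat \<Rightarrow> real"
  assumes "\<xi> \<in> {1..6}" "\<eta> \<in> {1..6}" "\<xi> \<noteq> \<eta>"
  shows "(\<Sum>\<alpha>\<in>{1..6}. \<Sum>\<beta>\<in>{1..6}. C \<alpha> \<beta> * two_component_path \<xi> \<eta> x y t \<beta>
            * deriv (\<lambda>s. two_component_path \<xi> \<eta> x y s \<alpha>) t)
       = C \<xi> \<xi> * x t * deriv x t + C \<xi> \<eta> * y t * deriv x t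
         + C \<eta> \<xi> * x t * deriv y t + C \<eta> \<eta> * y t * deriv y t"
proof -
  let ?P = "two_component_path \<xi> \<eta> x y"
  have sub: "{\<xi>, \<eta>} \<subseteq> {1..6::nat}" using assms by auto
  have "(\<Sum>\<alpha>\<in>{1..6}. \<Sum>\<beta>\<in>{1..6}. C \<alpha> \<beta> * ?P t \<beta> * deriv (\<lambda>s. ?P s \<alpha>) t)
      = (\<Sum>\<alpha>\<in>{\<xi>,\<eta>}. \<Sum>\<beta>\<in>{1..6}. C \<alpha> \<beta> * ?P t \<beta> * deriv (\<lambda>s. ?P s \<alpha>) t)"
    by (rule sum.mono_neutral_right) (use sub in \<open>auto simp: two_component_path_def\<close>)
  also have "\<dots> = (\<Sum>\<alpha>\<in>{\<xi>,\<eta>}. \<Sum>\<beta>\<in>{\<xi>,\<eta>}. C \<alpha> \<beta> * ?P t \<beta> * deriv (\<lambda>s. ?P s \<alpha>) t)"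
    by (rule sum.cong[OF refl], rule sum.mono_neutral_right)
       (use sub in \<open>auto simp: two_component_path_def\<close>)
  also have "\<dots> = C \<xi> \<xi> * x t * deriv x t + C \<xi> \<eta> * y t * deriv x t
         + C \<eta> \<xi> * x t * deriv y t + C \<eta> \<eta> * y t * deriv y t"
    using assms(3) by (simp add: two_component_path_def algebra_simps)
  finally show ?thesis .
qed

lemma stress_work_closed_two_component_path:
  fixes c b :: "nat \<Rightarrow> nat \<Rightarrow> real" and x y H :: "real \<Rightarrow> real"
  assumes c_sym: "c \<xi> \<eta> = c \<eta> \<xi>"
    and b_anti: "\<And>\<alpha> \<beta>. b \<alpha> \<beta> = - b \<beta> \<alpha>"
    and \<xi>: "\<xi> \<in> {1..6}" and \<eta>: "\<eta> \<in> {1..6}" and neq: "\<xi> \<noteq> \<eta>"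
    and t0: "0 \<le> t0"
    and x: "\<And>t. (x has_real_derivative x' t) (at t)"
    and y: "\<And>t. (y has_real_derivative y' t) (at t)"
    and H: "\<And>t. (H has_real_derivative y t * x' t - x t * y' t) (at t)"
    and closed: "x t0 = x 0" "y t0 = y 0"
  shows "stress_work (\<lambda>\<alpha> \<beta>. c \<alpha> \<beta> + b \<alpha> \<beta>) (two_component_path \<xi> \<eta> x y) t0
           = b \<xi> \<eta> * (H t0 - H 0)"
proof -
  define C where "C = (\<lambda>\<alpha> \<beta>. c \<alpha> \<beta> + b \<alpha> \<beta>)"
  define power where "power t = C \<xi> \<xi> * x t * x' t + C \<xi> \<eta> * y t * x' t
         + C \<eta> \<xi> * x t * y' t + C \<eta> \<eta> * y t * y' t" for t
  define F where "F t = c \<xi> \<xi> / 2 * (x t)\<^sup>2 + c \<eta> \<eta> / 2 * (y t)\<^sup>2 + c \<xi> \<eta> * x t * y t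
      + b \<xi> \<eta> * H t" for t
  have b_diag: "b \<xi> \<xi> = 0" "b \<eta> \<eta> = 0"
    using b_anti[of \<xi> \<xi>] b_anti[of \<eta> \<eta>] by simp_all
  have F_deriv: "(F has_real_derivative power t) (at t)" for t
  proof -
    have "(F has_real_derivative c \<xi> \<xi> * x t * x' t + c \<eta> \<eta> * y t * y' t
        + c \<xi> \<eta> * (x' t * y t + x t * y' t) + b \<xi> \<eta> * (y t * x' t - x t * y' t)) (at t)"
      unfolding F_def by (auto intro!: derivative_eq_intros x y H) (simp add: algebra_simps)
    moreover have "c \<xi> \<xi> * x t * x' t + c \<eta> \<eta> * y t * y' t
        + c \<xi> \<eta> * (x' t * y t + x t * y' t) + b \<xi> \<eta> * (y t * x' t - x t * y' t) = power t"
      unfolding power_def C_def using c_sym b_diag b_anti[of \<eta> \<xi>] by (simp add: algebra_simps)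
    ultimately show ?thesis by simp
  qed
  have "deriv x = x'" "deriv y = y'"
    using x y by (simp_all add: fun_eq_iff DERIV_imp_deriv)
  then have "stress_work C (two_component_path \<xi> \<eta> x y) t0 = integral {0..t0} power"
    unfolding stress_work_def stress_power_two_component_path[OF \<xi> \<eta> neq] power_def
    by simp
  moreover have "(power has_integral F t0 - F 0) {0..t0}"
    using t0 F_deriv
    by (intro fundamental_theorem_of_calculus)
       (auto simp: has_real_derivative_iff_has_vector_derivative[symmetric]
             intro: has_field_derivative_at_within)
  ultimately have "stress_work C (two_component_path \<xi> \<eta> x y) t0 = F t0 - F 0"
    by (simp add: integral_unique)
  also have "\<dots> = b \<xi> \<eta> * (H t0 - H 0)"
    unfolding F_def closed by (simp add: algebra_simps)
  finally show ?thesis unfolding C_def .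
qed

definition sin_cross_potential :: "real \<Rightarrow> real \<Rightarrow> real \<Rightarrow> real" where
  "sin_cross_potential A B t =
     (2*A*B * cos (A*t) * cos (B*t) + (A\<^sup>2 + B\<^sup>2) * sin (A*t) * sin (B*t)) / (A\<^sup>2 - B\<^sup>2)"

lemma has_real_derivative_sin_cross_potential:
  fixes A B :: real
  assumes "A\<^sup>2 \<noteq> B\<^sup>2"
  shows "(sin_cross_potential A B has_real_derivative
           sin (B*t) * (cos (A*t) * A) - sin (A*t) * (cos (B*t) * B)) (at t)"
proof -
  let ?D = "(2*A*B * ((- sin (A*t) * A) * cos (B*t) + cos (A*t) * (- sin (B*t) * B))
        + (A\<^sup>2 + B\<^sup>2) * ((cos (A*t) * A) * sin (B*t) + sin (A*t) * (cos (B*t) * B)))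
        / (A\<^sup>2 - B\<^sup>2)"
  have "(sin_cross_potential A B has_real_derivative ?D) (at t)"
    unfolding sin_cross_potential_def
    using assms by (auto intro!: derivative_eq_intros) (simp add: algebra_simps)
  moreover have "?D = sin (B*t) * (cos (A*t) * A) - sin (A*t) * (cos (B*t) * B)"
    using assms by (simp add: field_simps power2_eq_square)
  ultimately show ?thesis by simp
qed

lemma odd_sum_imp_square_diff_nonzero:
  fixes m n :: nat
  assumes "odd (m + n)"
  shows "(real n)\<^sup>2 - (real m)\<^sup>2 \<noteq> 0"
  using assms by (cases "n = 0") (auto simp: power2_eq_iff odd_pos)

lemma sin_cross_potential_increment:
  fixes m n :: nat and T :: real
  assumes T: "T \<noteq> 0" and odd: "odd (m + n)"
  defines "A \<equiv> pi * real m / T" and "B \<equiv> pi * real n / T"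
  shows "A\<^sup>2 \<noteq> B\<^sup>2"
    and "sin_cross_potential A B T - sin_cross_potential A B 0
           = 4 * real m * real n / ((real n)\<^sup>2 - (real m)\<^sup>2)"
proof -
  have mn: "(real n)\<^sup>2 - (real m)\<^sup>2 \<noteq> 0"
    using odd by (rule odd_sum_imp_square_diff_nonzero)
  have AB: "A\<^sup>2 - B\<^sup>2 = (pi / T)\<^sup>2 * ((real m)\<^sup>2 - (real n)\<^sup>2)"
    by (simp add: A_def B_def power_mult_distrib power_divide algebra_simps)
  then show "A\<^sup>2 \<noteq> B\<^sup>2"
    using mn T by auto
  have "cos (A*T) * cos (B*T) = -1"
    using T odd by (simp add: A_def B_def power_add[symmetric])
  moreover have "sin (A*T) = 0" "sin (B*T) = 0"
    using T by (simp_all add: A_def B_def sin_npi2)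
  ultimately have "sin_cross_potential A B T - sin_cross_potential A B 0 = - 4*A*B / (A\<^sup>2 - B\<^sup>2)"
    unfolding sin_cross_potential_def by (simp add: mult.assoc diff_divide_distrib[symmetric])
  also have "\<dots> = 4 * real m * real n / ((real n)\<^sup>2 - (real m)\<^sup>2)"
    using T mn unfolding AB by (simp add: A_def B_def field_simps power2_eq_square)
  finally show "sin_cross_potential A B T - sin_cross_potential A B 0
           = 4 * real m * real n / ((real n)\<^sup>2 - (real m)\<^sup>2)" .
qed

lemma sin_path_closed:
  "sin_path \<xi> \<eta> e\<xi> e\<eta> k\<xi> k\<eta> t0 0 = sin_path \<xi> \<eta> e\<xi> e\<eta> k\<xi> k\<eta> t0 t0"
  by (cases "t0 = 0") (simp_all add: fun_eq_iff sin_path_def sin_npi2)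

lemma stress_work_sin_path:
  fixes c b :: "nat \<Rightarrow> nat \<Rightarrow> real" and k\<xi> k\<eta> :: nat
  assumes c_sym: "c \<xi> \<eta> = c \<eta> \<xi>"
    and b_anti: "\<And>\<alpha> \<beta>. b \<alpha> \<beta> = - b \<beta> \<alpha>"
    and \<xi>: "\<xi> \<in> {1..6}" and \<eta>: "\<eta> \<in> {1..6}" and neq: "\<xi> \<noteq> \<eta>"
    and odd: "odd (k\<xi> + k\<eta>)"
    and t0: "t0 > 0"
  shows "stress_work (\<lambda>\<alpha> \<beta>. c \<alpha> \<beta> + b \<alpha> \<beta>) (sin_path \<xi> \<eta> e\<xi> e\<eta> k\<xi> k\<eta> t0) t0
      = 4 * real k\<xi> * real k\<eta> * e\<xi> * e\<eta> / ((real k\<eta>)\<^sup>2 - (real k\<xi>)\<^sup>2) * b \<xi> \<eta>"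
proof -
  define A where "A = pi * real k\<xi> / t0"
  define B where "B = pi * real k\<eta> / t0"
  have AB: "A\<^sup>2 \<noteq> B\<^sup>2"
    and increment: "sin_cross_potential A B t0 - sin_cross_potential A B 0
      = 4 * real k\<xi> * real k\<eta> / ((real k\<eta>)\<^sup>2 - (real k\<xi>)\<^sup>2)"
    using sin_cross_potential_increment[of t0 k\<xi> k\<eta>] t0 odd by (simp_all add: A_def B_def)
  have closed: "sin (A * t0) = sin (A * 0)" "sin (B * t0) = sin (B * 0)"
    using t0 by (simp_all add: A_def B_def sin_npi2)
  have "stress_work (\<lambda>\<alpha> \<beta>. c \<alpha> \<beta> + b \<alpha> \<beta>) (sin_path \<xi> \<eta> e\<xi> e\<eta> k\<xi> k\<eta> t0) t0
      = b \<xi> \<eta> * (e\<xi> * e\<eta> * sin_cross_potential A B t0 - e\<xi> * e\<eta> * sin_cross_potential A B 0)"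
    unfolding sin_path_eq_two_component_path A_def[symmetric] B_def[symmetric]
  proof (rule stress_work_closed_two_component_path[OF c_sym b_anti \<xi> \<eta> neq])
    show "((\<lambda>t. e\<xi> * e\<eta> * sin_cross_potential A B t) has_real_derivative
        e\<eta> * sin (B * t) * (e\<xi> * (cos (A * t) * A)) - e\<xi> * sin (A * t) * (e\<eta> * (cos (B * t) * B)))
        (at t)" for t
      using has_real_derivative_sin_cross_potential[OF AB, of t]
      by (auto intro!: derivative_eq_intros) (simp add: algebra_simps)
  qed (use t0 closed in \<open>auto intro!: derivative_eq_intros\<close>)
  also have "\<dots> = 4 * real k\<xi> * real k\<eta> * e\<xi> * e\<eta> / ((real k\<eta>)\<^sup>2 - (real k\<xi>)\<^sup>2) * b \<xi> \<eta>"
    by (simp add: right_diff_distrib[symmetric] increment)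
  finally show ?thesis .
qed

theorem mainTheorem8:
  fixes c b :: "nat \<Rightarrow> nat \<Rightarrow> real"
    and \<xi> \<eta> k\<xi> k\<eta> :: nat
    and e\<xi> e\<eta> t0 :: real
  assumes c_sym: "\<And>\<alpha> \<beta>. c \<alpha> \<beta> = c \<beta> \<alpha>"
    and b_anti: "\<And>\<alpha> \<beta>. b \<alpha> \<beta> = - b \<beta> \<alpha>"
    and \<xi>: "\<xi> \<in> {1..6}" and \<eta>: "\<eta> \<in> {1..6}" and neq: "\<xi> \<noteq> \<eta>"
    and k\<xi>: "k\<xi> > 0" and k\<eta>: "k\<eta> > 0"
    and odd: "odd (k\<xi> + k\<eta>)"
    and t0: "t0 > 0"
  shows "sin_path \<xi> \<eta> e\<xi> e\<eta> k\<xi> k\<eta> t0 0 = sin_path \<xi> \<eta> e\<xi> e\<eta> k\<xi> k\<eta> t0 t0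
    \<and> stress_work (\<lambda>\<alpha> \<beta>. c \<alpha> \<beta> + b \<alpha> \<beta>) (sin_path \<xi> \<eta> e\<xi> e\<eta> k\<xi> k\<eta> t0) t0
        = 4 * real k\<xi> * real k\<eta> * e\<xi> * e\<eta> / ((real k\<eta>)\<^sup>2 - (real k\<xi>)\<^sup>2) * b \<xi> \<eta>
    \<and> (e\<xi> * e\<eta> \<noteq> 0 \<longrightarrow>
        b \<xi> \<eta> = ((real k\<eta>)\<^sup>2 - (real k\<xi>)\<^sup>2) / (4 * real k\<xi> * real k\<eta> * e\<xi> * e\<eta>)
          * stress_work (\<lambda>\<alpha> \<beta>. c \<alpha> \<beta> + b \<alpha> \<beta>) (sin_path \<xi> \<eta> e\<xi> e\<eta> k\<xi> k\<eta> t0) t0)"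
proof -
  have "(real k\<eta>)\<^sup>2 - (real k\<xi>)\<^sup>2 \<noteq> 0"
    using odd by (rule odd_sum_imp_square_diff_nonzero)
  then show ?thesis
    unfolding stress_work_sin_path[OF c_sym[of \<xi> \<eta>] b_anti \<xi> \<eta> neq odd t0]
    using sin_path_closed k\<xi> k\<eta> by (auto simp: field_simps)
qed

end
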